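(* Let $\alpha>0$ and let $\mathit{rc}_\alpha$ be the rate of change function defined below. Then $\mathit{rc}_\alpha(x)<0$ for all $x\in(-1,1)$.
   Context: Let $\alpha>0$, $\varepsilon_\alpha=\frac{1}{4\alpha^2}$. The constant function $u\equiv\alpha$ solves the Helfrich Dirichlet problem $\frac{1}{u\sqrt{1+u'^2}}\frac{d}{dx}\bigl(\frac{u}{\sqrt{1+u'^2}}H'\bigr)+\frac12 H\bigl(\frac{u''}{(1+u'^2)^{3/2}}+\frac{1}{u\sqrt{1+u'^2}}\bigr)^2-2\varepsilon H=0$ in $(-1,1)$, $u(\pm1)=\alpha$, $u'(\pm1)=0$ (with $H=\frac12(\frac{1}{u\sqrt{1+u'^2}}-\frac{u''}{(1+u'^2)^{3/2}})$) for $\varepsilon=\varepsilon_\alpha$, and by the implicit function theorem there is a smooth family $(u_\varepsilon)$ of solutions for $\varepsilon$ near $\varepsilon_\alpha$ with $u_{\varepsilon_\alpha}\equiv\alpha$. The rate of change function is $\mathit{rc}_\alpha:=\frac{\partial u_\varepsilon}{\partial\varepsilon}\big|_{\varepsilon=\varepsilon_\alpha}$; equivalently, $\mathit{rc}_\alpha$ is the unique solution of $\mathit{rc}_\alpha^{(iv)}+\frac{1}{\alpha^4}\mathit{rc}_\alpha=-\frac{2}{\alpha}$ in $(-1,1)$, $\mathit{rc}_\alpha(\pm1)=\mathit{rc}_\alpha'(\pm1)=0$. *)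

theory Defs
  imports "HOL-Analysis.Analysis"
begin

text \<open>A classical solution of the boundary value problem characterising the rate of
change function rc_alpha:
  u'''' + u / alpha^4 = -2/alpha on (-1,1),  u(-1) = u(1) = 0,  u'(-1) = u'(1) = 0.
u is four times differentiable in the open interval (with iterated derivatives
given by deriv), and at the endpoints u has one-sided derivative 0 relative to [-1,1]
and value 0.\<close>

definition rc_bvp :: "real \<Rightarrow> (real \<Rightarrow> real) \<Rightarrow> bool" where
  "rc_bvp \<alpha> u \<longleftrightarrow>
     (\<forall>k<4. \<forall>x\<in>{-1<..<1}. ((deriv ^^ k) u) differentiable (at x)) \<and>
     (\<forall>x\<in>{-1<..<1}. (deriv ^^ 4) u x + u x / \<alpha> ^ 4 = - 2 / \<alpha>) \<and>
     u (-1) = 0 \<and> u 1 = 0 \<and>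
     (u has_real_derivative 0) (at (-1) within {-1..1}) \<and>
     (u has_real_derivative 0) (at 1 within {-1..1})"

end

theory Submission
  imports Defs
begin

(*
  With b = 1 / (sqrt 2 * alpha) the shifted function f = rc + 2 alpha^3 solves the homogeneous
  equation f'''' + 4 b^4 f = 0. An energy (Gronwall) estimate for f^2 + f'^2 + f''^2 + f'''^2
  gives uniqueness for the initial value problem, so f(x) is a combination of
  cosh y cos y, sinh y sin y, cosh y sin y, sinh y cos y at y = b x. The clamped boundary
  conditions at y = +-b kill the odd part and fix the even coefficients, and for |y| < t = b
  the profile then satisfies
    2 D (c - f) = c ((sinh (t-y) - sin (t-y)) (cosh (t+y) - cos (t+y))
                     + (cosh (t-y) - cos (t-y)) (sinh (t+y) - sin (t+y)))
  with c = 2 alpha^3 and D = sin t cos t + sinh t cosh t > 0. Every factor on the right is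
  positive since sinh s > sin s and cosh s > cos s for s > 0, hence f < c, i.e. rc < 0.
*)

lemma sinh_real_gt_self:
  fixes x :: real
  assumes "0 < x"
  shows "x < sinh x"
proof -
  have "(\<lambda>t. sinh t - t) 0 < (\<lambda>t. sinh t - t) x"
  proof (rule DERIV_pos_imp_increasing_open[OF assms])
    fix y :: real assume "0 < y" "y < x"
    then have "0 < cosh y - 1"
      using cosh_real_ge_1[of y] cosh_real_one_iff[of y] by linarith
    then show "\<exists>d. ((\<lambda>t. sinh t - t) has_real_derivative d) (at y) \<and> 0 < d"
      by (intro exI[of _ "cosh y - 1"]) (auto intro!: derivative_eq_intros)
  qed (intro continuous_intros)
  then show ?thesis by simp
qed

lemma sin_less_sinh_real:
  fixes x :: real
  assumes "0 < x"
  shows "sin x < sinh x"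
  using sinh_real_gt_self[OF assms] sin_x_le_x[of x] assms by linarith

lemma cos_less_cosh_real:
  fixes x :: real
  assumes "x \<noteq> 0"
  shows "cos x < cosh x"
  using cosh_real_ge_1[of x] cosh_real_one_iff[of x] cos_le_one[of x] assms by linarith

lemma abs_sin_cos_less_sinh_cosh:
  fixes x :: real
  assumes "0 < x"
  shows "\<bar>sin x * cos x\<bar> < sinh x * cosh x"
proof -
  have "\<bar>sin x\<bar> < sinh x"
    using sinh_real_gt_self[OF assms] abs_sin_x_le_abs_x[of x] assms by linarith
  have "\<bar>cos x\<bar> \<le> cosh x"
    using cosh_real_ge_1[of x] abs_cos_le_one[of x] by linarith
  then have "\<bar>sin x * cos x\<bar> \<le> \<bar>sin x\<bar> * cosh x"
    by (simp add: abs_mult mult_left_mono)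
  also have "\<dots> < sinh x * cosh x"
    using \<open>\<bar>sin x\<bar> < sinh x\<close> by (simp add: mult_strict_right_mono)
  finally show ?thesis .
qed

lemma nonneg_vanishes_if_abs_deriv_le:
  fixes E E' :: "real \<Rightarrow> real" and M x\<^sub>0 x :: real
  assumes S: "is_interval S" "x\<^sub>0 \<in> S" "x \<in> S"
    and deriv: "\<And>y. y \<in> S \<Longrightarrow> (E has_real_derivative E' y) (at y)"
    and bound: "\<And>y. y \<in> S \<Longrightarrow> \<bar>E' y\<bar> \<le> M * E y"
    and nonneg: "\<And>y. y \<in> S \<Longrightarrow> 0 \<le> E y"
    and "E x\<^sub>0 = 0"
  shows "E x = 0"
proof -
  have seg: "{x\<^sub>0..x} \<subseteq> S" "{x..x\<^sub>0} \<subseteq> S"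
    using mem_is_interval_1_I[OF S] mem_is_interval_1_I[OF S(1,3,2)] by auto
  \<comment> \<open>\<open>E y * exp (- M * y)\<close> decreases to the right of \<open>x\<^sub>0\<close>, \<open>E y * exp (M * y)\<close> increases to its left.\<close>
  have "E x \<le> 0"
  proof (cases "x\<^sub>0 \<le> x")
    case True
    have "E x * exp (- M * x) \<le> E x\<^sub>0 * exp (- M * x\<^sub>0)"
    proof (rule deriv_nonpos_imp_antimono[OF _ _ True])
      fix y assume "y \<in> {x\<^sub>0..x}"
      with seg have y: "y \<in> S" by blast
      show "((\<lambda>y. E y * exp (- M * y)) has_real_derivative (E' y - M * E y) * exp (- M * y)) (at y)"
        using deriv[OF y] by (auto intro!: derivative_eq_intros simp: algebra_simps)
      show "(E' y - M * E y) * exp (- M * y) \<le> 0"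
        using bound[OF y] by (simp add: mult_nonpos_nonneg)
    qed
    with \<open>E x\<^sub>0 = 0\<close> show ?thesis by (simp add: mult_le_0_iff)
  next
    case False
    then have "x \<le> x\<^sub>0" by simp
    have "E x * exp (M * x) \<le> E x\<^sub>0 * exp (M * x\<^sub>0)"
    proof (rule deriv_nonneg_imp_mono[OF _ _ \<open>x \<le> x\<^sub>0\<close>])
      fix y assume "y \<in> {x..x\<^sub>0}"
      with seg have y: "y \<in> S" by blast
      show "((\<lambda>y. E y * exp (M * y)) has_real_derivative (E' y + M * E y) * exp (M * y)) (at y)"
        using deriv[OF y] by (auto intro!: derivative_eq_intros simp: algebra_simps)
      show "0 \<le> (E' y + M * E y) * exp (M * y)"
        using bound[OF y] by simp
    qed
    with \<open>E x\<^sub>0 = 0\<close> show ?thesis by (simp add: mult_le_0_iff)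
  qed
  with nonneg[OF S(3)] show ?thesis by linarith
qed

lemma abs_energy_deriv_le:
  fixes a b c d k :: real
  shows "\<bar>2 * (a * b + b * c + c * d - k * d * a)\<bar> \<le> (2 + \<bar>k\<bar>) * (a\<^sup>2 + b\<^sup>2 + c\<^sup>2 + d\<^sup>2)"
proof -
  have sq: "2 * \<bar>x * y\<bar> \<le> x\<^sup>2 + y\<^sup>2" for x y :: real
    using sum_squares_bound[of "\<bar>x\<bar>" "\<bar>y\<bar>"] by (simp add: abs_mult)
  have tri: "\<bar>p + q + r - s\<bar> \<le> \<bar>p\<bar> + \<bar>q\<bar> + \<bar>r\<bar> + \<bar>s\<bar>" for p q r s :: real
    by arith
  have "2 * \<bar>k * d * a\<bar> = \<bar>k\<bar> * (2 * \<bar>d * a\<bar>)"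
    by (simp add: abs_mult ac_simps)
  also have "\<dots> \<le> \<bar>k\<bar> * (d\<^sup>2 + a\<^sup>2)"
    using sq by (rule mult_left_mono) simp
  finally have sq_k: "2 * \<bar>k * d * a\<bar> \<le> \<bar>k\<bar> * (d\<^sup>2 + a\<^sup>2)" .
  have "\<bar>2 * (a * b + b * c + c * d - k * d * a)\<bar> = 2 * \<bar>a * b + b * c + c * d - k * d * a\<bar>"
    unfolding abs_mult by simp
  also have "\<dots> \<le> 2 * (\<bar>a * b\<bar> + \<bar>b * c\<bar> + \<bar>c * d\<bar> + \<bar>k * d * a\<bar>)"
    by (rule mult_left_mono[OF tri]) simp
  also have "\<dots> \<le> (a\<^sup>2 + b\<^sup>2) + (b\<^sup>2 + c\<^sup>2) + (c\<^sup>2 + d\<^sup>2) + \<bar>k\<bar> * (d\<^sup>2 + a\<^sup>2)"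
    unfolding distrib_left[of 2] using sq[of a b] sq[of b c] sq[of c d] sq_k by (intro add_mono)
  also have "\<dots> \<le> (2 + \<bar>k\<bar>) * (a\<^sup>2 + b\<^sup>2 + c\<^sup>2 + d\<^sup>2)"
  proof -
    have "0 \<le> \<bar>k\<bar> * (b\<^sup>2 + c\<^sup>2)"
      by simp
    then show ?thesis
      by (simp add: algebra_simps)
  qed
  finally show ?thesis .
qed

lemma linear_quartic_ode_unique_zero:
  fixes f\<^sub>0 f\<^sub>1 f\<^sub>2 f\<^sub>3 :: "real \<Rightarrow> real" and k x\<^sub>0 x :: real
  assumes S: "is_interval S" "x\<^sub>0 \<in> S" "x \<in> S"
    and d\<^sub>0: "\<And>y. y \<in> S \<Longrightarrow> (f\<^sub>0 has_real_derivative f\<^sub>1 y) (at y)"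
    and d\<^sub>1: "\<And>y. y \<in> S \<Longrightarrow> (f\<^sub>1 has_real_derivative f\<^sub>2 y) (at y)"
    and d\<^sub>2: "\<And>y. y \<in> S \<Longrightarrow> (f\<^sub>2 has_real_derivative f\<^sub>3 y) (at y)"
    and d\<^sub>3: "\<And>y. y \<in> S \<Longrightarrow> (f\<^sub>3 has_real_derivative - k * f\<^sub>0 y) (at y)"
    and init: "f\<^sub>0 x\<^sub>0 = 0" "f\<^sub>1 x\<^sub>0 = 0" "f\<^sub>2 x\<^sub>0 = 0" "f\<^sub>3 x\<^sub>0 = 0"
  shows "f\<^sub>0 x = 0"
proof -
  define E where "E y = (f\<^sub>0 y)\<^sup>2 + (f\<^sub>1 y)\<^sup>2 + (f\<^sub>2 y)\<^sup>2 + (f\<^sub>3 y)\<^sup>2" for y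
  define E' where "E' y = 2 * (f\<^sub>0 y * f\<^sub>1 y + f\<^sub>1 y * f\<^sub>2 y + f\<^sub>2 y * f\<^sub>3 y - k * f\<^sub>3 y * f\<^sub>0 y)" for y
  have "E x = 0"
  proof (rule nonneg_vanishes_if_abs_deriv_le[OF S])
    fix y assume y: "y \<in> S"
    show "(E has_real_derivative E' y) (at y)"
      unfolding E_def[abs_def] E'_def
      using d\<^sub>0[OF y] d\<^sub>1[OF y] d\<^sub>2[OF y] d\<^sub>3[OF y]
      by (auto intro!: derivative_eq_intros simp: algebra_simps power2_eq_square)
    show "\<bar>E' y\<bar> \<le> (2 + \<bar>k\<bar>) * E y"
      unfolding E_def E'_def by (rule abs_energy_deriv_le)
    show "0 \<le> E y"
      unfolding E_def by simp
  qed (simp add: E_def init)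
  then show ?thesis
    unfolding E_def by (simp add: add_nonneg_eq_0_iff)
qed

text \<open>The general real solution of \<open>f'''' + 4 f = 0\<close>: real and imaginary parts of \<open>exp ((\<plusminus>1 \<plusminus> \<i>) y)\<close>.\<close>

definition hyptrig :: "real \<Rightarrow> real \<Rightarrow> real \<Rightarrow> real \<Rightarrow> real \<Rightarrow> real" where
  "hyptrig A B G J y = A * cosh y * cos y + B * sinh y * sin y + G * cosh y * sin y + J * sinh y * cos y"

lemma hyptrig_0 [simp]: "hyptrig A B G J 0 = A"
  by (simp add: hyptrig_def)

lemma has_real_derivative_hyptrig:
  "((\<lambda>x. hyptrig A B G J (b * x)) has_real_derivative b * hyptrig (G + J) (G - J) (B - A) (A + B) (b * x)) (at x)"
  unfolding hyptrig_def
  by (rule DERIV_cong, (auto intro!: derivative_eq_intros)[1]) (simp add: algebra_simps)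

lemma linear_quartic_ode_hyptrig:
  fixes f\<^sub>0 f\<^sub>1 f\<^sub>2 f\<^sub>3 :: "real \<Rightarrow> real" and b :: real
  assumes S: "is_interval S" "0 \<in> S" and "b \<noteq> 0"
    and d\<^sub>0: "\<And>y. y \<in> S \<Longrightarrow> (f\<^sub>0 has_real_derivative f\<^sub>1 y) (at y)"
    and d\<^sub>1: "\<And>y. y \<in> S \<Longrightarrow> (f\<^sub>1 has_real_derivative f\<^sub>2 y) (at y)"
    and d\<^sub>2: "\<And>y. y \<in> S \<Longrightarrow> (f\<^sub>2 has_real_derivative f\<^sub>3 y) (at y)"
    and d\<^sub>3: "\<And>y. y \<in> S \<Longrightarrow> (f\<^sub>3 has_real_derivative - (4 * b ^ 4) * f\<^sub>0 y) (at y)"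
  obtains A B G J where "\<And>x. x \<in> S \<Longrightarrow> f\<^sub>0 x = hyptrig A B G J (b * x)"
proof -
  \<comment> \<open>The coefficients are chosen so that \<open>p\<^sub>i 0 = f\<^sub>i 0\<close> for \<open>i \<le> 3\<close>.\<close>
  define A where "A = f\<^sub>0 0"
  define B where "B = f\<^sub>2 0 / (2 * b\<^sup>2)"
  define G where "G = (f\<^sub>1 0 / b + f\<^sub>3 0 / (2 * b ^ 3)) / 2"
  define J where "J = (f\<^sub>1 0 / b - f\<^sub>3 0 / (2 * b ^ 3)) / 2"
  define p\<^sub>0 where "p\<^sub>0 x = hyptrig A B G J (b * x)" for x
  define p\<^sub>1 where "p\<^sub>1 x = b * hyptrig (G + J) (G - J) (B - A) (A + B) (b * x)" for x
  define p\<^sub>2 where "p\<^sub>2 x = b\<^sup>2 * hyptrig (2 * B) (- 2 * A) (- 2 * J) (2 * G) (b * x)" for x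
  define p\<^sub>3 where "p\<^sub>3 x = b ^ 3 * hyptrig (2 * G - 2 * J) (- 2 * J - 2 * G) (- 2 * A - 2 * B) (2 * B - 2 * A) (b * x)" for x
  have p\<^sub>0: "(p\<^sub>0 has_real_derivative p\<^sub>1 x) (at x)" for x
    unfolding p\<^sub>0_def p\<^sub>1_def by (rule has_real_derivative_hyptrig)
  have p\<^sub>1: "(p\<^sub>1 has_real_derivative p\<^sub>2 x) (at x)" for x
    unfolding p\<^sub>1_def by (rule DERIV_cong, rule DERIV_cmult, rule has_real_derivative_hyptrig)
      (simp add: p\<^sub>2_def hyptrig_def algebra_simps power2_eq_square)
  have p\<^sub>2: "(p\<^sub>2 has_real_derivative p\<^sub>3 x) (at x)" for x
    unfolding p\<^sub>2_def by (rule DERIV_cong, rule DERIV_cmult, rule has_real_derivative_hyptrig)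
      (simp add: p\<^sub>3_def hyptrig_def algebra_simps power2_eq_square power3_eq_cube)
  have p\<^sub>3: "(p\<^sub>3 has_real_derivative - (4 * b ^ 4) * p\<^sub>0 x) (at x)" for x
    unfolding p\<^sub>3_def by (rule DERIV_cong, rule DERIV_cmult, rule has_real_derivative_hyptrig)
      (simp add: p\<^sub>0_def hyptrig_def algebra_simps power3_eq_cube power4_eq_xxxx)
  have "f\<^sub>0 x - p\<^sub>0 x = 0" if x: "x \<in> S" for x
  proof (rule linear_quartic_ode_unique_zero[OF S(1,2) x])
    fix y assume y: "y \<in> S"
    show "((\<lambda>x. f\<^sub>0 x - p\<^sub>0 x) has_real_derivative f\<^sub>1 y - p\<^sub>1 y) (at y)"
      using d\<^sub>0[OF y] p\<^sub>0 by (rule DERIV_diff)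
    show "((\<lambda>x. f\<^sub>1 x - p\<^sub>1 x) has_real_derivative f\<^sub>2 y - p\<^sub>2 y) (at y)"
      using d\<^sub>1[OF y] p\<^sub>1 by (rule DERIV_diff)
    show "((\<lambda>x. f\<^sub>2 x - p\<^sub>2 x) has_real_derivative f\<^sub>3 y - p\<^sub>3 y) (at y)"
      using d\<^sub>2[OF y] p\<^sub>2 by (rule DERIV_diff)
    show "((\<lambda>x. f\<^sub>3 x - p\<^sub>3 x) has_real_derivative - (4 * b ^ 4) * (f\<^sub>0 y - p\<^sub>0 y)) (at y)"
      using DERIV_diff[OF d\<^sub>3[OF y] p\<^sub>3] by (simp add: algebra_simps)
  qed (use \<open>b \<noteq> 0\<close> in \<open>simp_all add: A_def B_def G_def J_def p\<^sub>0_def p\<^sub>1_def p\<^sub>2_def p\<^sub>3_def field_simps\<close>)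
  then show ?thesis
    using that[of A B G J] by (simp add: p\<^sub>0_def)
qed

lemma hyptrig_gap_identity:
  fixes t y :: real
  shows "2 * (sin t * cos t + sinh t * cosh t - (cosh t * sin t + sinh t * cos t) * (cosh y * cos y)
          - (cosh t * sin t - sinh t * cos t) * (sinh y * sin y))
       = (sinh (t - y) - sin (t - y)) * (cosh (t + y) - cos (t + y))
         + (cosh (t - y) - cos (t - y)) * (sinh (t + y) - sin (t + y))"
proof -
  have "(sin t)\<^sup>2 + (cos t)\<^sup>2 = 1" "(sin y)\<^sup>2 + (cos y)\<^sup>2 = 1" by simp_all
  moreover have "(cosh t)\<^sup>2 - (sinh t)\<^sup>2 = 1" "(cosh y)\<^sup>2 - (sinh y)\<^sup>2 = 1"
    by (simp_all add: hyperbolic_pythagoras)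
  ultimately show ?thesis
    unfolding sin_add sin_diff cos_add cos_diff sinh_add sinh_diff cosh_add cosh_diff by algebra
qed

lemma hyptrig_clamped_coeffs:
  fixes t c A B G J :: real
  assumes "0 < t"
    and "hyptrig A B G J t = c" "hyptrig A B G J (- t) = c"
    and "hyptrig (G + J) (G - J) (B - A) (A + B) t = 0" "hyptrig (G + J) (G - J) (B - A) (A + B) (- t) = 0"
  shows "G = 0" "J = 0"
    and "A * (sin t * cos t + sinh t * cosh t) = c * (cosh t * sin t + sinh t * cos t)"
    and "B * (sin t * cos t + sinh t * cosh t) = c * (cosh t * sin t - sinh t * cos t)"
proof -
  let ?s = "sin t" and ?co = "cos t" and ?sh = "sinh t" and ?ch = "cosh t"
  have pyth: "?s\<^sup>2 + ?co\<^sup>2 = 1" "?ch\<^sup>2 - ?sh\<^sup>2 = 1"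
    by (simp_all add: hyperbolic_pythagoras)
  \<comment> \<open>The even part of \<open>hyptrig\<close> only involves \<open>A, B\<close> and the odd part only \<open>G, J\<close>.\<close>
  have even: "A * ?ch * ?co + B * ?sh * ?s = c" "(B - A) * ?ch * ?s + (A + B) * ?sh * ?co = 0"
    and odd: "G * ?ch * ?s + J * ?sh * ?co = 0" "(G + J) * ?ch * ?co + (G - J) * ?sh * ?s = 0"
    using assms(2-5) by (simp_all add: hyptrig_def algebra_simps)
  have gap: "?sh * ?ch - ?s * ?co \<noteq> 0"
    using abs_sin_cos_less_sinh_cosh[OF \<open>0 < t\<close>] by linarith
  have "G * (?sh * ?ch - ?s * ?co) = 0" "J * (?sh * ?ch - ?s * ?co) = 0"
    using odd pyth by algebra+
  with gap show "G = 0" "J = 0" by simp_all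
  have "A * (?s * ?co + ?sh * ?ch)
      = (A * ?ch * ?co + B * ?sh * ?s) * (?ch * ?s + ?sh * ?co)
        - ((B - A) * ?ch * ?s + (A + B) * ?sh * ?co) * (?sh * ?s)
        + A * ?s * ?co * (1 - (?ch\<^sup>2 - ?sh\<^sup>2)) + A * ?sh * ?ch * (1 - (?s\<^sup>2 + ?co\<^sup>2))"
    by algebra
  with even pyth show "A * (?s * ?co + ?sh * ?ch) = c * (?ch * ?s + ?sh * ?co)"
    by simp
  have "B * (?s * ?co + ?sh * ?ch)
      = (A * ?ch * ?co + B * ?sh * ?s) * (?ch * ?s - ?sh * ?co)
        + ((B - A) * ?ch * ?s + (A + B) * ?sh * ?co) * (?ch * ?co)
        + B * ?s * ?co * (1 - (?ch\<^sup>2 - ?sh\<^sup>2)) + B * ?sh * ?ch * (1 - (?s\<^sup>2 + ?co\<^sup>2))"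
    by algebra
  with even pyth show "B * (?s * ?co + ?sh * ?ch) = c * (?ch * ?s - ?sh * ?co)"
    by simp
qed

lemma hyptrig_clamped_gap:
  fixes t c y A B G J :: real
  assumes "0 < t"
    and "hyptrig A B G J t = c" "hyptrig A B G J (- t) = c"
    and "hyptrig (G + J) (G - J) (B - A) (A + B) t = 0" "hyptrig (G + J) (G - J) (B - A) (A + B) (- t) = 0"
  shows "2 * (sin t * cos t + sinh t * cosh t) * (c - hyptrig A B G J y)
    = c * ((sinh (t - y) - sin (t - y)) * (cosh (t + y) - cos (t + y))
           + (cosh (t - y) - cos (t - y)) * (sinh (t + y) - sin (t + y)))"
proof -
  note coeffs = hyptrig_clamped_coeffs[OF assms]
  let ?D = "sin t * cos t + sinh t * cosh t"
  have "2 * ?D * (c - hyptrig A B G J y)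
      = 2 * (?D * c - (A * ?D) * (cosh y * cos y) - (B * ?D) * (sinh y * sin y))"
    using coeffs(1,2) by (simp add: hyptrig_def algebra_simps)
  also have "\<dots> = c * (2 * (?D - (cosh t * sin t + sinh t * cos t) * (cosh y * cos y)
                           - (cosh t * sin t - sinh t * cos t) * (sinh y * sin y)))"
    unfolding coeffs(3,4) by (simp add: algebra_simps)
  finally show ?thesis
    unfolding hyptrig_gap_identity .
qed

lemma hyptrig_clamped_less:
  fixes t c y A B G J :: real
  assumes "0 < c" "\<bar>y\<bar> < t"
    and "hyptrig A B G J t = c" "hyptrig A B G J (- t) = c"
    and "hyptrig (G + J) (G - J) (B - A) (A + B) t = 0" "hyptrig (G + J) (G - J) (B - A) (A + B) (- t) = 0"
  shows "hyptrig A B G J y < c"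
proof -
  have "0 < t - y" "0 < t + y"
    using \<open>\<bar>y\<bar> < t\<close> by auto
  then have "0 < c * ((sinh (t - y) - sin (t - y)) * (cosh (t + y) - cos (t + y))
           + (cosh (t - y) - cos (t - y)) * (sinh (t + y) - sin (t + y)))"
    using \<open>0 < c\<close> sin_less_sinh_real cos_less_cosh_real by (simp add: add_pos_pos)
  moreover have "0 < t"
    using \<open>\<bar>y\<bar> < t\<close> by linarith
  then have "0 < sin t * cos t + sinh t * cosh t"
    using abs_sin_cos_less_sinh_cosh[of t] unfolding abs_less_iff by linarith
  ultimately show ?thesis
    unfolding hyptrig_clamped_gap[OF \<open>0 < t\<close> assms(3-6), symmetric]
    by (simp add: zero_less_mult_iff)
qed

lemma derivative_eq_if_eq_on_Icc:
  fixes f g :: "real \<Rightarrow> real"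
  assumes "l < r" "a \<in> {l..r}"
    and "(f has_real_derivative f') (at a within {l..r})" "(g has_real_derivative g') (at a)"
    and "\<And>x. x \<in> {l..r} \<Longrightarrow> f x = g x"
  shows "f' = g'"
proof (rule has_field_derivative_unique)
  show "(g has_real_derivative f') (at a within {l..r})"
    using has_field_derivative_transform_within[OF assms(3) zero_less_one assms(2)] assms(5) by blast
  show "(g has_real_derivative g') (at a within {l..r})"
    using assms(4) by (rule has_field_derivative_at_within)
  show "at a within {l..r} \<noteq> bot"
    using assms(1,2) by (simp add: trivial_limit_within)
qed

lemma rc_bvp_has_real_derivative:
  assumes "rc_bvp \<alpha> u" "k < 4" "x \<in> {-1<..<1}"
  shows "((deriv ^^ k) u has_real_derivative (deriv ^^ Suc k) u x) (at x)"
  using assms unfolding rc_bvp_def by (simp add: DERIV_deriv_iff_real_differentiable)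

lemma rc_bvp_continuous_on:
  assumes "rc_bvp \<alpha> u"
  shows "continuous_on {-1..1} u"
proof (rule continuous_on_eq_continuous_within[THEN iffD2], intro ballI)
  fix x :: real assume "x \<in> {-1..1}"
  then consider "x \<in> {-1<..<1}" | "x = -1" | "x = 1"
    by fastforce
  then show "continuous (at x within {-1..1}) u"
  proof cases
    case 1
    then show ?thesis
      using rc_bvp_has_real_derivative[OF assms, of 0 x]
      by (simp add: DERIV_continuous continuous_at_imp_continuous_at_within)
  qed (use assms in \<open>auto simp: rc_bvp_def intro: DERIV_continuous\<close>)
qed

lemma rc_bvp_boundary_conditions:
  fixes g g' :: "real \<Rightarrow> real"
  assumes "rc_bvp \<alpha> u"
    and eq: "\<And>x. x \<in> {-1<..<1} \<Longrightarrow> u x = g x"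
    and g': "\<And>x. (g has_real_derivative g' x) (at x)"
  shows "g (-1) = 0" "g 1 = 0" "g' (-1) = 0" "g' 1 = 0"
proof -
  have "continuous_on {-1..1} g"
    using g' by (intro continuous_at_imp_continuous_on) (auto intro: DERIV_isCont)
  with rc_bvp_continuous_on[OF assms(1)] have "continuous_on {-1..1} (\<lambda>x. u x - g x)"
    by (rule continuous_on_diff)
  then have eq': "u x = g x" if "x \<in> {-1..1}" for x
    using continuous_constant_on_closure[of "{-1<..<1}" "\<lambda>x. u x - g x" 0 x] eq that by simp
  with assms(1) show "g (-1) = 0" "g 1 = 0"
    unfolding rc_bvp_def by auto
  show "g' (-1) = 0" "g' 1 = 0"
    using derivative_eq_if_eq_on_Icc[of "-1" 1 _ u 0 g, OF _ _ _ g' eq'] assms(1)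
    unfolding rc_bvp_def by auto
qed

lemma rc_bvp_hyptrig_representation:
  assumes "rc_bvp \<alpha> u" "\<alpha> \<noteq> 0" and b: "4 * b ^ 4 = 1 / \<alpha> ^ 4"
  obtains A B G J where "\<And>x. x \<in> {-1<..<1} \<Longrightarrow> u x + 2 * \<alpha> ^ 3 = hyptrig A B G J (b * x)"
proof (rule linear_quartic_ode_hyptrig[of "{-1<..<1}" b "\<lambda>x. u x + 2 * \<alpha> ^ 3" "(deriv ^^ 1) u" "(deriv ^^ 2) u" "(deriv ^^ 3) u"])
  show "b \<noteq> 0"
    using b \<open>\<alpha> \<noteq> 0\<close> by auto
  note D = rc_bvp_has_real_derivative[OF assms(1)]
  fix y :: real assume y: "y \<in> {-1<..<1}"
  show "((\<lambda>x. u x + 2 * \<alpha> ^ 3) has_real_derivative (deriv ^^ 1) u y) (at y)"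
    using D[of 0 y] y by (auto intro!: derivative_eq_intros)
  show "((deriv ^^ 1) u has_real_derivative (deriv ^^ 2) u y) (at y)"
    using D[of 1 y] y by (simp add: numeral_2_eq_2)
  show "((deriv ^^ 2) u has_real_derivative (deriv ^^ 3) u y) (at y)"
    using D[of 2 y] y by (simp add: numeral_3_eq_3 numeral_2_eq_2)
  have "(deriv ^^ 4) u y + u y / \<alpha> ^ 4 = - 2 / \<alpha>"
    using assms(1) y unfolding rc_bvp_def by blast
  then have "(deriv ^^ 4) u y = - (u y / \<alpha> ^ 4) - 2 / \<alpha>"
    by linarith
  also have "\<dots> = - (4 * b ^ 4) * (u y + 2 * \<alpha> ^ 3)"
    unfolding b using \<open>\<alpha> \<noteq> 0\<close> by (simp add: field_simps eval_nat_numeral)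
  finally show "((deriv ^^ 3) u has_real_derivative - (4 * b ^ 4) * (u y + 2 * \<alpha> ^ 3)) (at y)"
    using D[of 3 y] y by (simp add: eval_nat_numeral)
qed (auto simp: is_interval_1)

lemma rc_bvp_hyptrig_clamped:
  assumes "rc_bvp \<alpha> u" "b \<noteq> 0"
    and rep: "\<And>x. x \<in> {-1<..<1} \<Longrightarrow> u x + c = hyptrig A B G J (b * x)"
  shows "hyptrig A B G J b = c" "hyptrig A B G J (- b) = c"
    and "hyptrig (G + J) (G - J) (B - A) (A + B) b = 0" "hyptrig (G + J) (G - J) (B - A) (A + B) (- b) = 0"
proof -
  define g where "g x = hyptrig A B G J (b * x) - c" for x
  have "(g has_real_derivative b * hyptrig (G + J) (G - J) (B - A) (A + B) (b * x)) (at x)" for x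
    unfolding g_def using DERIV_diff[OF has_real_derivative_hyptrig DERIV_const] by simp
  from rc_bvp_boundary_conditions[OF assms(1) _ this] rep \<open>b \<noteq> 0\<close>
  show "hyptrig A B G J b = c" "hyptrig A B G J (- b) = c"
    and "hyptrig (G + J) (G - J) (B - A) (A + B) b = 0" "hyptrig (G + J) (G - J) (B - A) (A + B) (- b) = 0"
    unfolding g_def by (auto simp: algebra_simps)
qed

theorem theorem4p2:
  fixes \<alpha> :: real and rc :: "real \<Rightarrow> real"
  assumes "\<alpha> > 0"
    and "rc_bvp \<alpha> rc"
  shows "\<forall>x\<in>{-1<..<1}. rc x < 0"
proof
  fix x :: real assume x: "x \<in> {-1<..<1}"
  define b where "b = 1 / (sqrt 2 * \<alpha>)"
  have "0 < b" "0 < 2 * \<alpha> ^ 3"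
    using \<open>\<alpha> > 0\<close> by (simp_all add: b_def)
  have "4 * b ^ 4 = 1 / \<alpha> ^ 4"
    using \<open>\<alpha> > 0\<close> by (simp add: b_def power_mult_distrib power4_eq_xxxx field_simps)
  with assms obtain A B G J
    where rep: "\<And>x. x \<in> {-1<..<1} \<Longrightarrow> rc x + 2 * \<alpha> ^ 3 = hyptrig A B G J (b * x)"
    by (elim rc_bvp_hyptrig_representation) auto
  have "\<bar>b * x\<bar> < b"
    using x \<open>0 < b\<close> by (simp add: abs_mult abs_less_iff)
  with hyptrig_clamped_less[OF \<open>0 < 2 * \<alpha> ^ 3\<close> _ rc_bvp_hyptrig_clamped[OF assms(2) _ rep]] \<open>0 < b\<close>
  have "hyptrig A B G J (b * x) < 2 * \<alpha> ^ 3"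
    by simp
  with rep[OF x] show "rc x < 0"
    by simp
qed

end
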